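(* Let $\Omega\subseteq\mathbb{R}^n$ be open. A function $f\in\mathbb{A}(\Omega)$ is D-continuous if and only if $G(f)=f$, where $G(f)=[I(S(I(f))),S(I(S(f)))]$.
   Context: $\overline{\mathbb{R}}=\mathbb{R}\cup\{\pm\infty\}$, $\mathbb{I}\overline{\mathbb{R}}$ is the set of closed intervals $[\underline a,\overline a]$ with $\underline a\le\overline a$ in $\overline{\mathbb{R}}$, $a\in\overline{\mathbb{R}}$ identified with $[a,a]$. $\mathbb{A}(X)$ is the set of functions $X\to\mathbb{I}\overline{\mathbb{R}}$. $B_\delta(x)=\{y\in\Omega:\|x-y\|<\delta\}$. For dense $D\subseteq\Omega$ and $f\in\mathbb{A}(D)$: $I(D,\Omega,f)(x)=\sup_{\delta>0}\inf\{z\in f(y):y\in B_\delta(x)\cap D\}$, $S(D,\Omega,f)(x)=\inf_{\delta>0}\sup\{z\in f(y):y\in B_\delta(x)\cap D\}$, $F(D,\Omega,f)(x)=[I(D,\Omega,f)(x),S(D,\Omega,f)(x)]$; when $D=\Omega$ write $I(f),S(f)$. $f\in\mathbb{A}(\Omega)$ is D-continuous if $F(D,\Omega,f)=f$ for every dense subset $D$ of $\Omega$ (using the restriction of $f$ to $D$). *)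

theory Defs
  imports "HOL-Analysis.Analysis"
begin

text \<open>An interval [a,b] in the extended reals is represented by the pair (a,b) with a \<le> b;
  a value a is identified with (a,a).\<close>

definition interval_fun :: "'a set \<Rightarrow> ('a \<Rightarrow> ereal \<times> ereal) \<Rightarrow> bool" where
  "interval_fun \<Omega> f \<longleftrightarrow> (\<forall>x\<in>\<Omega>. fst (f x) \<le> snd (f x))"

definition degen :: "('a \<Rightarrow> ereal) \<Rightarrow> 'a \<Rightarrow> ereal \<times> ereal" where
  "degen g = (\<lambda>x. (g x, g x))"

definition Bdelta :: "'a::metric_space set \<Rightarrow> real \<Rightarrow> 'a \<Rightarrow> 'a set" where
  "Bdelta \<Omega> \<delta> x = {y\<in>\<Omega>. dist x y < \<delta>}"

definition lowerF :: "'a::metric_space set \<Rightarrow> 'a set \<Rightarrow> ('a \<Rightarrow> ereal \<times> ereal) \<Rightarrow> 'a \<Rightarrow> ereal" where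
  "lowerF D \<Omega> f x = (SUP \<delta>\<in>{0<..}. Inf {z. \<exists>y\<in>Bdelta \<Omega> \<delta> x \<inter> D. fst (f y) \<le> z \<and> z \<le> snd (f y)})"

definition upperF :: "'a::metric_space set \<Rightarrow> 'a set \<Rightarrow> ('a \<Rightarrow> ereal \<times> ereal) \<Rightarrow> 'a \<Rightarrow> ereal" where
  "upperF D \<Omega> f x = (INF \<delta>\<in>{0<..}. Sup {z. \<exists>y\<in>Bdelta \<Omega> \<delta> x \<inter> D. fst (f y) \<le> z \<and> z \<le> snd (f y)})"

definition FF :: "'a::metric_space set \<Rightarrow> 'a set \<Rightarrow> ('a \<Rightarrow> ereal \<times> ereal) \<Rightarrow> 'a \<Rightarrow> ereal \<times> ereal" where
  "FF D \<Omega> f x = (lowerF D \<Omega> f x, upperF D \<Omega> f x)"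

definition dense_subset :: "'a::topological_space set \<Rightarrow> 'a set \<Rightarrow> bool" where
  "dense_subset D \<Omega> \<longleftrightarrow> D \<subseteq> \<Omega> \<and> \<Omega> \<subseteq> closure D"

definition D_continuous :: "'a::metric_space set \<Rightarrow> ('a \<Rightarrow> ereal \<times> ereal) \<Rightarrow> bool" where
  "D_continuous \<Omega> f \<longleftrightarrow> (\<forall>D. dense_subset D \<Omega> \<longrightarrow> (\<forall>x\<in>\<Omega>. FF D \<Omega> f x = f x))"

definition GG :: "'a::metric_space set \<Rightarrow> ('a \<Rightarrow> ereal \<times> ereal) \<Rightarrow> 'a \<Rightarrow> ereal \<times> ereal" where
  "GG \<Omega> f x =
     (lowerF \<Omega> \<Omega> (degen (upperF \<Omega> \<Omega> (degen (lowerF \<Omega> \<Omega> f)))) x,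
      upperF \<Omega> \<Omega> (degen (lowerF \<Omega> \<Omega> (degen (upperF \<Omega> \<Omega> f)))) x)"

end

(*
  On an interval function f = [f1, f2], the operator F(D, Omega, -) acts on the endpoints
  separately, as the lower envelope I_D f1 and the upper envelope S_D f2; so it suffices to
  show, for a single extended-real function g, that I_D g = g for every dense D iff
  I(S(I g)) = g (the upper endpoint follows by the duality S g = - I(-g)).
  The key identity is that the supremum of I_D g over all dense D is I(S g): on one side,
  a dense D meets every ball, so the values of g on D bound S g from below; on the other,
  if S g > c on a ball around x, the points of that ball where g <= c have empty interior,
  so removing them leaves a dense D on which I_D g(x) >= c. Since I_Omega g = g forces
  S(I g) = S g, and I is idempotent, both directions follow.
*)

theory Submission
  imports Defs
begin

definition lower_baire :: "'a::metric_space set \<Rightarrow> 'a set \<Rightarrow> ('a \<Rightarrow> ereal) \<Rightarrow> 'a \<Rightarrow> ereal" where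
  "lower_baire D \<Omega> g x = (SUP \<delta>\<in>{0<..}. INF y\<in>Bdelta \<Omega> \<delta> x \<inter> D. g y)"

definition upper_baire :: "'a::metric_space set \<Rightarrow> 'a set \<Rightarrow> ('a \<Rightarrow> ereal) \<Rightarrow> 'a \<Rightarrow> ereal" where
  "upper_baire D \<Omega> g x = (INF \<delta>\<in>{0<..}. SUP y\<in>Bdelta \<Omega> \<delta> x \<inter> D. g y)"

lemma Inf_union_of_intervals:
  fixes a b :: "'b \<Rightarrow> 'c::complete_linorder"
  assumes "\<And>y. y \<in> S \<Longrightarrow> a y \<le> b y"
  shows "Inf {z. \<exists>y\<in>S. a y \<le> z \<and> z \<le> b y} = (INF y\<in>S. a y)"
proof (rule antisym)
  show "Inf {z. \<exists>y\<in>S. a y \<le> z \<and> z \<le> b y} \<le> (INF y\<in>S. a y)"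
  proof (rule INF_greatest)
    fix y assume "y \<in> S"
    with assms show "Inf {z. \<exists>y\<in>S. a y \<le> z \<and> z \<le> b y} \<le> a y"
      by (intro Inf_lower) auto
  qed
qed (auto intro!: Inf_greatest INF_lower2)

lemma Sup_union_of_intervals:
  fixes a b :: "'b \<Rightarrow> 'c::complete_linorder"
  assumes "\<And>y. y \<in> S \<Longrightarrow> a y \<le> b y"
  shows "Sup {z. \<exists>y\<in>S. a y \<le> z \<and> z \<le> b y} = (SUP y\<in>S. b y)"
proof (rule antisym)
  show "(SUP y\<in>S. b y) \<le> Sup {z. \<exists>y\<in>S. a y \<le> z \<and> z \<le> b y}"
  proof (rule SUP_least)
    fix y assume "y \<in> S"
    with assms show "b y \<le> Sup {z. \<exists>y\<in>S. a y \<le> z \<and> z \<le> b y}"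
      by (intro Sup_upper) auto
  qed
qed (auto intro!: Sup_least SUP_upper2)

lemma lowerF_eq_lower_baire:
  assumes "interval_fun \<Omega> f"
  shows "lowerF D \<Omega> f = lower_baire D \<Omega> (\<lambda>y. fst (f y))"
  unfolding lowerF_def lower_baire_def
  using assms by (intro ext SUP_cong refl Inf_union_of_intervals) (auto simp: Bdelta_def interval_fun_def)

lemma upperF_eq_upper_baire:
  assumes "interval_fun \<Omega> f"
  shows "upperF D \<Omega> f = upper_baire D \<Omega> (\<lambda>y. snd (f y))"
  unfolding upperF_def upper_baire_def
  using assms by (intro ext INF_cong refl Sup_union_of_intervals) (auto simp: Bdelta_def interval_fun_def)

lemma lowerF_degen: "lowerF D \<Omega> (degen g) = lower_baire D \<Omega> g"
  by (simp add: lowerF_eq_lower_baire interval_fun_def degen_def)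

lemma upperF_degen: "upperF D \<Omega> (degen g) = upper_baire D \<Omega> g"
  by (simp add: upperF_eq_upper_baire interval_fun_def degen_def)

lemma lower_baire_uminus: "lower_baire D \<Omega> (\<lambda>y. - g y) = (\<lambda>x. - upper_baire D \<Omega> g x)"
  unfolding upper_baire_def lower_baire_def by (simp add: ereal_INF_uminus_eq ereal_SUP_uminus_eq)

lemma upper_baire_uminus: "upper_baire D \<Omega> (\<lambda>y. - g y) = (\<lambda>x. - lower_baire D \<Omega> g x)"
  unfolding upper_baire_def lower_baire_def by (simp add: ereal_INF_uminus_eq ereal_SUP_uminus_eq)

lemma less_lower_baire_iff:
  "c < lower_baire D \<Omega> g x \<longleftrightarrow> (\<exists>\<delta>>0. c < (INF y\<in>Bdelta \<Omega> \<delta> x \<inter> D. g y))"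
  by (auto simp: lower_baire_def less_SUP_iff)

lemma INF_le_lower_baire:
  "\<delta> > 0 \<Longrightarrow> (INF y\<in>Bdelta \<Omega> \<delta> x \<inter> D. g y) \<le> lower_baire D \<Omega> g x"
  unfolding lower_baire_def by (rule SUP_upper) simp

lemma Bdelta_shrink_subset:
  assumes "y \<in> Bdelta \<Omega> \<delta> x" "\<epsilon> \<le> \<delta> - dist x y"
  shows "Bdelta \<Omega> \<epsilon> y \<subseteq> Bdelta \<Omega> \<delta> x"
proof
  fix z assume "z \<in> Bdelta \<Omega> \<epsilon> y"
  moreover have "dist x z \<le> dist x y + dist y z" by (rule dist_triangle)
  ultimately show "z \<in> Bdelta \<Omega> \<delta> x" using assms by (auto simp: Bdelta_def)
qed

lemma lower_baire_le_self: "x \<in> D \<Longrightarrow> x \<in> \<Omega> \<Longrightarrow> lower_baire D \<Omega> g x \<le> g x"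
  unfolding lower_baire_def by (auto intro!: SUP_least INF_lower2 simp: Bdelta_def)

lemma lower_baire_antimono_set: "D \<subseteq> D' \<Longrightarrow> lower_baire D' \<Omega> g x \<le> lower_baire D \<Omega> g x"
  unfolding lower_baire_def by (intro SUP_mono) (auto intro!: INF_superset_mono)

lemma lower_baire_cong:
  "(\<And>y. y \<in> \<Omega> \<Longrightarrow> g y = h y) \<Longrightarrow> lower_baire D \<Omega> g = lower_baire D \<Omega> h"
  unfolding lower_baire_def by (intro ext SUP_cong refl INF_cong) (auto simp: Bdelta_def)

lemma upper_baire_cong:
  "(\<And>y. y \<in> \<Omega> \<Longrightarrow> g y = h y) \<Longrightarrow> upper_baire D \<Omega> g = upper_baire D \<Omega> h"
  unfolding upper_baire_def by (intro ext INF_cong refl SUP_cong) (auto simp: Bdelta_def)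

lemma lower_baire_idem:
  assumes "x \<in> \<Omega>"
  shows "lower_baire \<Omega> \<Omega> (lower_baire D \<Omega> k) x = lower_baire D \<Omega> k x"
proof (rule antisym)
  show "lower_baire \<Omega> \<Omega> (lower_baire D \<Omega> k) x \<le> lower_baire D \<Omega> k x"
    by (rule lower_baire_le_self[OF assms assms])
  show "lower_baire D \<Omega> k x \<le> lower_baire \<Omega> \<Omega> (lower_baire D \<Omega> k) x"
  proof (rule dense_le)
    fix c assume "c < lower_baire D \<Omega> k x"
    then obtain \<delta> where "\<delta> > 0" and c: "c < (INF z\<in>Bdelta \<Omega> \<delta> x \<inter> D. k z)"
      unfolding less_lower_baire_iff by blast
    have "c \<le> lower_baire D \<Omega> k y" if y: "y \<in> Bdelta \<Omega> \<delta> x \<inter> \<Omega>" for y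
    proof -
      have "(INF z\<in>Bdelta \<Omega> \<delta> x \<inter> D. k z) \<le> (INF z\<in>Bdelta \<Omega> (\<delta> - dist x y) y \<inter> D. k z)"
        using y Bdelta_shrink_subset[of y \<Omega> \<delta> x] by (intro INF_superset_mono) auto
      also have "\<dots> \<le> lower_baire D \<Omega> k y"
        using y by (intro INF_le_lower_baire) (simp add: Bdelta_def)
      finally show ?thesis using c by simp
    qed
    then have "c \<le> (INF y\<in>Bdelta \<Omega> \<delta> x \<inter> \<Omega>. lower_baire D \<Omega> k y)"
      by (rule INF_greatest)
    also have "\<dots> \<le> lower_baire \<Omega> \<Omega> (lower_baire D \<Omega> k) x"
      using \<open>\<delta> > 0\<close> by (rule INF_le_lower_baire)
    finally show "c \<le> lower_baire \<Omega> \<Omega> (lower_baire D \<Omega> k) x" .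
  qed
qed

lemma lower_baire_le_lower_upper_baire:
  assumes "dense_subset D \<Omega>"
  shows "lower_baire D \<Omega> g x \<le> lower_baire \<Omega> \<Omega> (upper_baire \<Omega> \<Omega> g) x"
proof (rule dense_le)
  fix c assume "c < lower_baire D \<Omega> g x"
  then obtain \<delta> where "\<delta> > 0" and c: "c < (INF y\<in>Bdelta \<Omega> \<delta> x \<inter> D. g y)"
    unfolding less_lower_baire_iff by blast
  have "c \<le> upper_baire \<Omega> \<Omega> g p" if p: "p \<in> Bdelta \<Omega> \<delta> x \<inter> \<Omega>" for p
    unfolding upper_baire_def
  proof (rule INF_greatest)
    fix \<epsilon> :: real assume "\<epsilon> \<in> {0<..}"
    define \<epsilon>' where "\<epsilon>' = min \<epsilon> (\<delta> - dist x p)"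
    have "\<epsilon>' > 0" using \<open>\<epsilon> \<in> {0<..}\<close> p by (auto simp: \<epsilon>'_def Bdelta_def)
    moreover have "p \<in> closure D" using p assms by (auto simp: dense_subset_def)
    ultimately obtain q where "q \<in> D" "dist q p < \<epsilon>'"
      unfolding closure_approachable by blast
    then have q: "q \<in> Bdelta \<Omega> \<epsilon>' p \<inter> D"
      using assms by (auto simp: Bdelta_def dense_subset_def dist_commute)
    have "c < g q"
      using q p Bdelta_shrink_subset[of p \<Omega> \<delta> x \<epsilon>'] c
      by (auto simp: \<epsilon>'_def intro: less_le_trans INF_lower)
    also have "\<dots> \<le> (SUP y\<in>Bdelta \<Omega> \<epsilon> p \<inter> \<Omega>. g y)"
      using q assms by (intro SUP_upper) (auto simp: \<epsilon>'_def Bdelta_def dense_subset_def)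
    finally show "c \<le> (SUP y\<in>Bdelta \<Omega> \<epsilon> p \<inter> \<Omega>. g y)" by simp
  qed
  then have "c \<le> (INF p\<in>Bdelta \<Omega> \<delta> x \<inter> \<Omega>. upper_baire \<Omega> \<Omega> g p)"
    by (rule INF_greatest)
  also have "\<dots> \<le> lower_baire \<Omega> \<Omega> (upper_baire \<Omega> \<Omega> g) x"
    using \<open>\<delta> > 0\<close> by (rule INF_le_lower_baire)
  finally show "c \<le> lower_baire \<Omega> \<Omega> (upper_baire \<Omega> \<Omega> g) x" .
qed

lemma dense_subset_with_lower_baire_ge:
  assumes "c < lower_baire \<Omega> \<Omega> (upper_baire \<Omega> \<Omega> g) x"
  obtains D where "dense_subset D \<Omega>" and "c \<le> lower_baire D \<Omega> g x"
proof -
  obtain \<delta> where "\<delta> > 0" and c: "c < (INF p\<in>Bdelta \<Omega> \<delta> x \<inter> \<Omega>. upper_baire \<Omega> \<Omega> g p)"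
    using assms unfolding less_lower_baire_iff by blast
  \<comment> \<open>The removed set has empty interior, since the upper envelope of g exceeds c on the ball.\<close>
  define D where "D = \<Omega> - {y \<in> Bdelta \<Omega> \<delta> x. g y \<le> c}"
  have "p \<in> closure D" if "p \<in> \<Omega>" for p
    unfolding closure_approachable
  proof (intro allI impI)
    fix \<epsilon> :: real assume "\<epsilon> > 0"
    show "\<exists>q\<in>D. dist q p < \<epsilon>"
    proof (cases "p \<in> D")
      case False
      with \<open>p \<in> \<Omega>\<close> have p: "p \<in> Bdelta \<Omega> \<delta> x" by (simp add: D_def)
      define \<epsilon>' where "\<epsilon>' = min \<epsilon> (\<delta> - dist x p)"
      have "\<epsilon>' > 0" using \<open>\<epsilon> > 0\<close> p by (auto simp: \<epsilon>'_def Bdelta_def)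
      have "c < upper_baire \<Omega> \<Omega> g p"
        using c by (rule less_le_trans) (use p in \<open>simp add: INF_lower Bdelta_def\<close>)
      also have "\<dots> \<le> (SUP y\<in>Bdelta \<Omega> \<epsilon>' p \<inter> \<Omega>. g y)"
        unfolding upper_baire_def using \<open>\<epsilon>' > 0\<close> by (intro INF_lower) simp
      finally obtain q where q: "q \<in> Bdelta \<Omega> \<epsilon>' p" and "c < g q"
        by (auto simp: less_SUP_iff)
      then have "q \<in> D" and "dist q p < \<epsilon>"
        using Bdelta_shrink_subset[OF p, of \<epsilon>']
        by (auto simp: D_def \<epsilon>'_def Bdelta_def dist_commute)
      then show ?thesis by blast
    qed (use \<open>\<epsilon> > 0\<close> in force)
  qed
  then have "dense_subset D \<Omega>" by (auto simp: dense_subset_def D_def)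
  moreover have "c \<le> (INF y\<in>Bdelta \<Omega> \<delta> x \<inter> D. g y)"
    by (auto intro!: INF_greatest simp: D_def)
  then have "c \<le> lower_baire D \<Omega> g x"
    using INF_le_lower_baire[OF \<open>\<delta> > 0\<close>] by (rule order_trans)
  ultimately show thesis by (rule that)
qed

lemma SUP_dense_lower_baire:
  "(SUP D\<in>{D. dense_subset D \<Omega>}. lower_baire D \<Omega> g x) = lower_baire \<Omega> \<Omega> (upper_baire \<Omega> \<Omega> g) x"
proof (rule antisym)
  show "(SUP D\<in>{D. dense_subset D \<Omega>}. lower_baire D \<Omega> g x) \<le> lower_baire \<Omega> \<Omega> (upper_baire \<Omega> \<Omega> g) x"
    by (auto intro!: SUP_least lower_baire_le_lower_upper_baire)
  show "lower_baire \<Omega> \<Omega> (upper_baire \<Omega> \<Omega> g) x \<le> (SUP D\<in>{D. dense_subset D \<Omega>}. lower_baire D \<Omega> g x)"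
  proof (rule dense_le)
    fix c assume "c < lower_baire \<Omega> \<Omega> (upper_baire \<Omega> \<Omega> g) x"
    then obtain D where "dense_subset D \<Omega>" "c \<le> lower_baire D \<Omega> g x"
      by (rule dense_subset_with_lower_baire_ge)
    then show "c \<le> (SUP D\<in>{D. dense_subset D \<Omega>}. lower_baire D \<Omega> g x)"
      by (auto intro: SUP_upper2)
  qed
qed

lemma dense_subset_refl: "dense_subset \<Omega> \<Omega>"
  by (simp add: dense_subset_def closure_subset)

lemma lower_baire_dense_invariant_iff:
  "(\<forall>D. dense_subset D \<Omega> \<longrightarrow> (\<forall>x\<in>\<Omega>. lower_baire D \<Omega> g x = g x)) \<longleftrightarrow>
   (\<forall>x\<in>\<Omega>. lower_baire \<Omega> \<Omega> (upper_baire \<Omega> \<Omega> (lower_baire \<Omega> \<Omega> g)) x = g x)"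
proof
  assume H: "\<forall>D. dense_subset D \<Omega> \<longrightarrow> (\<forall>x\<in>\<Omega>. lower_baire D \<Omega> g x = g x)"
  then have "upper_baire \<Omega> \<Omega> (lower_baire \<Omega> \<Omega> g) = upper_baire \<Omega> \<Omega> g"
    using dense_subset_refl by (intro upper_baire_cong) blast
  moreover have "lower_baire \<Omega> \<Omega> (upper_baire \<Omega> \<Omega> g) x = g x" if "x \<in> \<Omega>" for x
  proof -
    have "(SUP D\<in>{D. dense_subset D \<Omega>}. lower_baire D \<Omega> g x) = (SUP D\<in>{D. dense_subset D \<Omega>}. g x)"
      using H that by (intro SUP_cong) auto
    also have "\<dots> = g x"
      using dense_subset_refl by (intro SUP_const) blast
    finally show ?thesis by (simp only: SUP_dense_lower_baire)
  qed
  ultimately show "\<forall>x\<in>\<Omega>. lower_baire \<Omega> \<Omega> (upper_baire \<Omega> \<Omega> (lower_baire \<Omega> \<Omega> g)) x = g x"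
    by simp
next
  assume E: "\<forall>x\<in>\<Omega>. lower_baire \<Omega> \<Omega> (upper_baire \<Omega> \<Omega> (lower_baire \<Omega> \<Omega> g)) x = g x"
  have lsc: "lower_baire \<Omega> \<Omega> g x = g x" if "x \<in> \<Omega>" for x
  proof -
    have "lower_baire \<Omega> \<Omega> g x = lower_baire \<Omega> \<Omega> (lower_baire \<Omega> \<Omega> (upper_baire \<Omega> \<Omega> (lower_baire \<Omega> \<Omega> g))) x"
      using E by (simp cong: lower_baire_cong)
    also have "\<dots> = g x"
      using E that by (simp add: lower_baire_idem)
    finally show ?thesis .
  qed
  then have "upper_baire \<Omega> \<Omega> (lower_baire \<Omega> \<Omega> g) = upper_baire \<Omega> \<Omega> g"
    by (rule upper_baire_cong)
  with E have E': "lower_baire \<Omega> \<Omega> (upper_baire \<Omega> \<Omega> g) x = g x" if "x \<in> \<Omega>" for x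
    using that by simp
  show "\<forall>D. dense_subset D \<Omega> \<longrightarrow> (\<forall>x\<in>\<Omega>. lower_baire D \<Omega> g x = g x)"
  proof (intro allI impI ballI antisym)
    fix D x assume D: "dense_subset D \<Omega>" and "x \<in> \<Omega>"
    have "g x = lower_baire \<Omega> \<Omega> g x" using lsc \<open>x \<in> \<Omega>\<close> by simp
    also have "\<dots> \<le> lower_baire D \<Omega> g x"
      using D by (intro lower_baire_antimono_set) (simp add: dense_subset_def)
    finally show "g x \<le> lower_baire D \<Omega> g x" .
    have "lower_baire D \<Omega> g x \<le> lower_baire \<Omega> \<Omega> (upper_baire \<Omega> \<Omega> g) x"
      using D by (rule lower_baire_le_lower_upper_baire)
    then show "lower_baire D \<Omega> g x \<le> g x" using E' \<open>x \<in> \<Omega>\<close> by simp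
  qed
qed

lemma upper_baire_dense_invariant_iff:
  "(\<forall>D. dense_subset D \<Omega> \<longrightarrow> (\<forall>x\<in>\<Omega>. upper_baire D \<Omega> h x = h x)) \<longleftrightarrow>
   (\<forall>x\<in>\<Omega>. upper_baire \<Omega> \<Omega> (lower_baire \<Omega> \<Omega> (upper_baire \<Omega> \<Omega> h)) x = h x)"
  using lower_baire_dense_invariant_iff[of \<Omega> "\<lambda>y. - h y"]
  by (simp add: lower_baire_uminus upper_baire_uminus)

theorem theorem13:
  fixes \<Omega> :: "'a::euclidean_space set" and f :: "'a \<Rightarrow> ereal \<times> ereal"
  assumes "open \<Omega>" and "interval_fun \<Omega> f"
  shows "D_continuous \<Omega> f \<longleftrightarrow> (\<forall>x\<in>\<Omega>. GG \<Omega> f x = f x)"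
proof -
  let ?f1 = "\<lambda>y. fst (f y)" and ?f2 = "\<lambda>y. snd (f y)"
  have "D_continuous \<Omega> f \<longleftrightarrow>
      (\<forall>D. dense_subset D \<Omega> \<longrightarrow> (\<forall>x\<in>\<Omega>. lower_baire D \<Omega> ?f1 x = ?f1 x)) \<and>
      (\<forall>D. dense_subset D \<Omega> \<longrightarrow> (\<forall>x\<in>\<Omega>. upper_baire D \<Omega> ?f2 x = ?f2 x))"
    unfolding D_continuous_def FF_def prod_eq_iff
      lowerF_eq_lower_baire[OF assms(2)] upperF_eq_upper_baire[OF assms(2)] by auto
  also have "\<dots> \<longleftrightarrow> (\<forall>x\<in>\<Omega>. GG \<Omega> f x = f x)"
    unfolding lower_baire_dense_invariant_iff upper_baire_dense_invariant_iff GG_def prod_eq_iff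
      lowerF_eq_lower_baire[OF assms(2)] upperF_eq_upper_baire[OF assms(2)] lowerF_degen upperF_degen
    by auto
  finally show ?thesis .
qed

end
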